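(* Let $\hat P=\mathrm{Spec}(B)$ be an affine extension of a principal $\mathbb{G}_a$-bundle $P\to S_*$, with $D$ the locally nilpotent derivation of $B$ given by the $\mathbb{G}_a$-action. Then for every $\nu>0$ the zero locus in $S$ of the ideal $\mathfrak m_\nu(B)=D^\nu(\ker D^{\nu+1})\subset\mathcal O(S)$ is contained in $\{\mathbf x\}$; i.e. either all these ideals are $\mathfrak m_{\mathbf x}$-primary, or (in the remaining case) $\mathrm{gr}_D(B)=\mathcal O(S)[t]$.
   Context: All varieties are over $\mathbb{C}$. $S$ normal affine surface, $\mathbf{x}\in S$ a closed regular point with maximal ideal $\mathfrak m_{\mathbf x}$, $S_*=S\setminus\{\mathbf{x}\}$. An affine extension of $\pi\colon P\to S_*$ is a normal affine $\mathbb{G}_a$-variety $\hat P=\mathrm{Spec}(B)$ with a morphism $\hat\pi\colon\hat P\to S$ and a $\mathbb{G}_a$-equivariant dominant open embedding $\iota\colon P\hookrightarrow\hat P$ with $\iota(P)=\hat\pi^{-1}(S_* )$ and $\hat\pi\circ\iota=\pi$. Here $\ker D=\mathcal O(S)$. $\mathrm{gr}_D(B)=\bigoplus_\nu \ker D^{\nu+1}/\ker D^\nu\simeq\bigoplus_\nu\mathfrak m_\nu(B)t^\nu\subset\mathcal O(S)[t]$ via $b\mapsto \frac{D^\nu b}{\nu!}t^\nu$. *)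

theory Defs
  imports Complex_Main
begin

text \<open>Commutative algebra over the complex numbers, rendered with a domain type 'b
 (the coordinate ring B of the affine extension) and a ring embedding of the
 scalars. Subrings (such as O(S) = ker D) are subsets of 'b.\<close>

definition scalar_hom :: "(complex \<Rightarrow> 'b::idom) \<Rightarrow> bool" where
  "scalar_hom \<iota> \<longleftrightarrow> (\<forall>a b. \<iota> (a + b) = \<iota> a + \<iota> b) \<and> (\<forall>a b. \<iota> (a * b) = \<iota> a * \<iota> b)
     \<and> \<iota> 1 = 1"

inductive_set subalg :: "'b::comm_ring_1 set \<Rightarrow> 'b set \<Rightarrow> 'b set" for R G where
  base: "r \<in> R \<Longrightarrow> r \<in> subalg R G"
| gen: "g \<in> G \<Longrightarrow> g \<in> subalg R G"
| add: "x \<in> subalg R G \<Longrightarrow> y \<in> subalg R G \<Longrightarrow> x + y \<in> subalg R G"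
| mult: "x \<in> subalg R G \<Longrightarrow> y \<in> subalg R G \<Longrightarrow> x * y \<in> subalg R G"

definition fg_algebra :: "(complex \<Rightarrow> 'b::comm_ring_1) \<Rightarrow> 'b set \<Rightarrow> bool" where
  "fg_algebra \<iota> R \<longleftrightarrow> (\<exists>G. finite G \<and> G \<subseteq> R \<and> subalg (range \<iota>) G = R)"

definition derivation :: "(complex \<Rightarrow> 'b::comm_ring_1) \<Rightarrow> ('b \<Rightarrow> 'b) \<Rightarrow> bool" where
  "derivation \<iota> D \<longleftrightarrow> (\<forall>x y. D (x + y) = D x + D y) \<and> (\<forall>x y. D (x * y) = x * D y + y * D x)
     \<and> (\<forall>c. D (\<iota> c) = 0)"

definition locally_nilpotent :: "('b::zero \<Rightarrow> 'b) \<Rightarrow> bool" where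
  "locally_nilpotent D \<longleftrightarrow> (\<forall>b. \<exists>n. (D ^^ n) b = 0)"

definition ideal_in :: "'b::comm_ring_1 set \<Rightarrow> 'b set \<Rightarrow> bool" where
  "ideal_in A I \<longleftrightarrow> I \<subseteq> A \<and> 0 \<in> I \<and> (\<forall>x\<in>I. \<forall>y\<in>I. x + y \<in> I) \<and> (\<forall>a\<in>A. \<forall>x\<in>I. a * x \<in> I)"

definition ideal_gen :: "'b::comm_ring_1 set \<Rightarrow> 'b set \<Rightarrow> 'b set" where
  "ideal_gen A S = \<Inter> {I. ideal_in A I \<and> S \<subseteq> I}"

definition prime_in :: "'b::comm_ring_1 set \<Rightarrow> 'b set \<Rightarrow> bool" where
  "prime_in A P \<longleftrightarrow> ideal_in A P \<and> P \<noteq> A \<and> (\<forall>x\<in>A. \<forall>y\<in>A. x * y \<in> P \<longrightarrow> x \<in> P \<or> y \<in> P)"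

definition maximal_in :: "'b::comm_ring_1 set \<Rightarrow> 'b set \<Rightarrow> bool" where
  "maximal_in A M \<longleftrightarrow> ideal_in A M \<and> M \<noteq> A \<and>
     (\<forall>J. ideal_in A J \<and> M \<subseteq> J \<longrightarrow> J = M \<or> J = A)"

definition prime_chain :: "'b::comm_ring_1 set \<Rightarrow> (nat \<Rightarrow> 'b set) \<Rightarrow> nat \<Rightarrow> bool" where
  "prime_chain A p n \<longleftrightarrow> (\<forall>i\<le>n. prime_in A (p i)) \<and> (\<forall>i<n. p i \<subset> p (Suc i))"

definition krull_dim_eq :: "'b::comm_ring_1 set \<Rightarrow> nat \<Rightarrow> bool" where
  "krull_dim_eq A n \<longleftrightarrow> (\<exists>p. prime_chain A p n) \<and> \<not> (\<exists>p. prime_chain A p (Suc n))"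

definition height_eq :: "'b::comm_ring_1 set \<Rightarrow> 'b set \<Rightarrow> nat \<Rightarrow> bool" where
  "height_eq A M n \<longleftrightarrow> (\<exists>p. prime_chain A p n \<and> p n = M) \<and>
     \<not> (\<exists>p. prime_chain A p (Suc n) \<and> p (Suc n) = M)"

definition ideal_sq :: "'b::comm_ring_1 set \<Rightarrow> 'b set \<Rightarrow> 'b set" where
  "ideal_sq A M = ideal_gen A {x * y | x y. x \<in> M \<and> y \<in> M}"

definition ideal_sum :: "'b::comm_ring_1 set \<Rightarrow> 'b set \<Rightarrow> 'b set" where
  "ideal_sum I J = {x + y | x y. x \<in> I \<and> y \<in> J}"

text \<open>Embedding dimension: minimal number of elements of M spanning M/M^2.\<close>
definition cotangent_spanned :: "'b::comm_ring_1 set \<Rightarrow> 'b set \<Rightarrow> 'b set \<Rightarrow> bool" where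
  "cotangent_spanned A M S \<longleftrightarrow> S \<subseteq> M \<and> M \<subseteq> ideal_sum (ideal_gen A S) (ideal_sq A M)"

definition embdim_eq :: "'b::comm_ring_1 set \<Rightarrow> 'b set \<Rightarrow> nat \<Rightarrow> bool" where
  "embdim_eq A M n \<longleftrightarrow> (\<exists>S. finite S \<and> card S = n \<and> cotangent_spanned A M S) \<and>
     \<not> (\<exists>S. finite S \<and> card S < n \<and> cotangent_spanned A M S)"

definition regular_point :: "'b::comm_ring_1 set \<Rightarrow> 'b set \<Rightarrow> bool" where
  "regular_point A M \<longleftrightarrow> maximal_in A M \<and> height_eq A M 2 \<and> embdim_eq A M 2"

text \<open>Normality of a domain R (integrally closed in its fraction field), unfolded:
  if p/q (q \<noteq> 0) satisfies a monic equation over R, then q divides p in R.\<close>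
definition normal_domain :: "'b::idom set \<Rightarrow> bool" where
  "normal_domain R \<longleftrightarrow> (\<forall>p\<in>R. \<forall>q\<in>R. \<forall>n c. q \<noteq> 0 \<and> (\<forall>i<n. c i \<in> R) \<and>
      p ^ n + (\<Sum>i<n. c i * p ^ i * q ^ (n - i)) = 0 \<longrightarrow> (\<exists>r\<in>R. p = r * q))"

text \<open>The principal G_a-bundle condition for P = preimage of S_* in Spec B:
 Zariski-local equivariant triviality. Over a principal open D(f) of S, an
 A_f-isomorphism A_f[t] \<cong> B_f intertwining d/dt with D is the same as an element
 s = b / f^k of B_f with D s = 1 such that A_f[s] = B_f and s is algebraically
 independent over A_f; here written out with fractions cleared.\<close>
definition trivial_over :: "'b::idom set \<Rightarrow> ('b \<Rightarrow> 'b) \<Rightarrow> 'b \<Rightarrow> bool" where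
  "trivial_over A D f \<longleftrightarrow> (\<exists>b k. D b = f ^ k \<and>
      (\<forall>c. \<exists>j n a. (\<forall>i<n. a i \<in> A) \<and> f ^ j * c = (\<Sum>i<n. a i * b ^ i)) \<and>
      (\<forall>n a. (\<forall>i<n. a i \<in> A) \<and> (\<Sum>i<n. a i * b ^ i) = 0 \<longrightarrow> (\<forall>i<n. a i = 0)))"

definition principal_bundle_off :: "'b::idom set \<Rightarrow> ('b \<Rightarrow> 'b) \<Rightarrow> 'b set \<Rightarrow> bool" where
  "principal_bundle_off A D M \<longleftrightarrow>
     (\<forall>N. maximal_in A N \<and> N \<noteq> M \<longrightarrow> (\<exists>f\<in>A. f \<notin> N \<and> trivial_over A D f))"

end

theory Submission
  imports Defs
begin

(* Let N be a maximal ideal of A = ker D containing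
   m_nu = D^nu (ker D^(nu+1)), and suppose N is not M.  The bundle is trivial
   near N: there is f in A \ N and b in B with D b = f^k.  Put c = f^k.  As
   D c = 0, one computes D^nu (b^nu) = nu! * c^nu and D^(nu+1) (b^nu) = 0, so
   nu! * f^(k*nu) lies in m_nu, hence in N.  Since nu! is invertible in the
   scalars C, which sit inside A, also f^(k*nu) lies in N, and since maximal
   ideals are prime, f lies in N: a contradiction. *)

lemma derivation_add:
  "derivation \<iota> D \<Longrightarrow> D (x + y) = D x + D y"
  unfolding derivation_def by blast

lemma derivation_mult:
  "derivation \<iota> D \<Longrightarrow> D (x * y) = x * D y + y * D x"
  unfolding derivation_def by blast

lemma derivation_zero: "derivation \<iota> D \<Longrightarrow> D 0 = 0"
  using derivation_add[of \<iota> D 0 0] by simp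

lemma derivation_one: "derivation \<iota> D \<Longrightarrow> D 1 = 0"
  using derivation_mult[of \<iota> D 1 1] by simp

lemma kernel_closed:
  assumes "derivation \<iota> D" and "D x = 0" and "D y = 0"
  shows "D (x + y) = 0" and "D (x * y) = 0"
  using assms derivation_add[OF assms(1)] derivation_mult[OF assms(1)] by simp_all

lemma derivation_kernel_linear:
  assumes "derivation \<iota> D" and "D a = 0"
  shows "D (a * x) = a * D x"
  using derivation_mult[OF assms(1), of a x] assms(2) by simp

lemma derivation_of_nat:
  assumes "derivation \<iota> (D :: 'b::comm_ring_1 \<Rightarrow> 'b)"
  shows "D (of_nat k) = 0"
  by (induction k) (simp_all add: derivation_zero[OF assms] derivation_one[OF assms]
      derivation_add[OF assms])

lemma derivation_power:
  assumes "derivation \<iota> (D :: 'b::comm_ring_1 \<Rightarrow> 'b)"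
  shows "D (b ^ Suc m) = of_nat (Suc m) * b ^ m * D b"
proof (induction m)
  case 0
  then show ?case by simp
next
  case (Suc m)
  have "D (b ^ Suc (Suc m)) = b * D (b ^ Suc m) + b ^ Suc m * D b"
    using derivation_mult[OF assms, of b "b ^ Suc m"] by simp
  then show ?case
    using Suc by (simp add: algebra_simps)
qed

lemma kernel_power:
  assumes "derivation \<iota> (D :: 'b::comm_ring_1 \<Rightarrow> 'b)" and "D c = 0"
  shows "D (c ^ m) = 0"
  by (induction m) (simp_all add: assms(2) derivation_one[OF assms(1)] kernel_closed[OF assms(1)])

text \<open>If D b = c lies in the kernel, the iterated derivatives of b^n are those
  of t^n with respect to d/dt: D^j (b^n) = n (n-1) ... (n-j+1) c^j b^(n-j).\<close>

lemma iterate_derivation_power: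
  assumes der: "derivation \<iota> (D :: 'b::comm_ring_1 \<Rightarrow> 'b)"
    and Db: "D b = c" and Dc: "D c = 0" and "j \<le> n"
  shows "(D ^^ j) (b ^ n) = of_nat (\<Prod>i<j. n - i) * c ^ j * b ^ (n - j)"
  using \<open>j \<le> n\<close>
proof (induction j)
  case 0
  then show ?case by simp
next
  case (Suc j)
  define K :: 'b where "K = of_nat (\<Prod>i<j. n - i) * c ^ j"
  obtain m where m: "n - j = Suc m" and m': "n - Suc j = m"
    using Suc.prems by (metis Suc_diff_Suc Suc_le_lessD diff_Suc_1)
  have DK: "D K = 0"
    unfolding K_def
    using kernel_closed(2)[OF der derivation_of_nat[OF der] kernel_power[OF der Dc]] .
  have "(D ^^ Suc j) (b ^ n) = D (K * b ^ Suc m)"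
    using Suc m by (simp add: K_def)
  also have "\<dots> = K * (of_nat (Suc m) * b ^ m * c)"
    using derivation_kernel_linear[OF der DK] derivation_power[OF der] Db by simp
  also have "\<dots> = of_nat (\<Prod>i<Suc j. n - i) * c ^ Suc j * b ^ (n - Suc j)"
    unfolding K_def m' using m by (simp add: algebra_simps)
  finally show ?case .
qed

text \<open>Consequently b^n lies in ker D^(n+1) and D^n (b^n) = n! c^n: the element
  n! c^n belongs to the ideal m_n = D^n (ker D^(n+1)).\<close>

lemma factorial_power_in_image:
  assumes der: "derivation \<iota> (D :: 'b::comm_ring_1 \<Rightarrow> 'b)"
    and Db: "D b = c" and Dc: "D c = 0"
  shows "of_nat (fact n) * c ^ n \<in> (D ^^ n) ` {x. (D ^^ Suc n) x = 0}"
proof -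
  have "(\<Prod>i<n. n - i) = fact n"
    by (simp add: fact_prod_rev lessThan_atLeast0)
  then have top: "(D ^^ n) (b ^ n) = of_nat (fact n) * c ^ n"
    using iterate_derivation_power[OF der Db Dc, of n n] by simp
  have "D (of_nat (fact n) * c ^ n) = 0"
    using kernel_closed(2)[OF der derivation_of_nat[OF der] kernel_power[OF der Dc]] .
  then have "(D ^^ Suc n) (b ^ n) = 0"
    using top by simp
  then show ?thesis
    using top by (metis (mono_tags, lifting) image_eqI mem_Collect_eq)
qed

text \<open>A nonzero integer is a unit of a C-algebra, and its inverse is a scalar;
  so an ideal of a subring containing the scalars is divisible by it.\<close>

lemma ideal_cancel_of_nat:
  assumes scal: "scalar_hom (\<iota> :: complex \<Rightarrow> 'b::idom)"
    and scalars: "range \<iota> \<subseteq> A" and I: "ideal_in A N"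
    and p: "p \<noteq> 0" and pxN: "of_nat p * x \<in> N"
  shows "x \<in> N"
proof -
  have add: "\<And>a b. \<iota> (a + b) = \<iota> a + \<iota> b" and mult: "\<And>a b. \<iota> (a * b) = \<iota> a * \<iota> b"
    and one: "\<iota> 1 = 1"
    using scal unfolding scalar_hom_def by blast+
  have "\<iota> 0 = 0"
    using add[of 0 0] by (metis add_cancel_left_right add_0)
  then have iota_nat: "\<iota> (of_nat k) = of_nat k" for k
    by (induction k) (simp_all add: add one)
  have "\<iota> (1 / of_nat p) * of_nat p = \<iota> (1 / of_nat p * of_nat p)"
    by (metis mult iota_nat)
  also have "\<dots> = 1"
    using p one by simp
  finally have "x = \<iota> (1 / of_nat p) * (of_nat p * x)"
    by (metis mult.assoc mult_1)
  then show ?thesis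
    using I scalars pxN unfolding ideal_in_def by (metis range_subsetD)
qed

text \<open>A maximal ideal of a subring is prime: if x is not in N, then N + A x is
  the whole ring, and 1 = n + a x gives y = y n + a (x y).\<close>

lemma maximal_imp_prime:
  assumes max: "maximal_in A N"
    and closed: "\<And>x y. x \<in> A \<Longrightarrow> y \<in> A \<Longrightarrow> x + y \<in> A \<and> x * y \<in> A" and "1 \<in> A"
    and x: "x \<in> A" and y: "y \<in> A" and xy: "x * y \<in> N" and xN: "x \<notin> N"
  shows "y \<in> N"
proof -
  have I: "ideal_in A N"
    using max unfolding maximal_in_def by blast
  then have NA: "N \<subseteq> A" and zero: "0 \<in> N"
    and N_add: "\<And>u v. u \<in> N \<Longrightarrow> v \<in> N \<Longrightarrow> u + v \<in> N"
    and N_mult: "\<And>a u. a \<in> A \<Longrightarrow> u \<in> N \<Longrightarrow> a * u \<in> N"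
    unfolding ideal_in_def by blast+
  define J where "J = {n + a * x | n a. n \<in> N \<and> a \<in> A}"
  have "ideal_in A J"
    unfolding ideal_in_def
  proof (intro conjI ballI)
    show "J \<subseteq> A"
      using NA closed x unfolding J_def by auto
    show "0 \<in> J"
      unfolding J_def using zero NA by force
  next
    fix u v assume "u \<in> J" "v \<in> J"
    then obtain n1 a1 n2 a2 where "u = n1 + a1 * x" "v = n2 + a2 * x"
      and "n1 \<in> N" "n2 \<in> N" "a1 \<in> A" "a2 \<in> A"
      unfolding J_def by blast
    moreover have "u + v = (n1 + n2) + (a1 + a2) * x"
      using calculation by (simp add: algebra_simps)
    ultimately show "u + v \<in> J"
      unfolding J_def using N_add closed by blast
  next
    fix c u assume c: "c \<in> A" and "u \<in> J"
    then obtain n a where "u = n + a * x" "n \<in> N" "a \<in> A"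
      unfolding J_def by blast
    moreover have "c * u = c * n + (c * a) * x"
      using calculation by (simp add: algebra_simps)
    ultimately show "c * u \<in> J"
      unfolding J_def using N_mult closed c by blast
  qed
  moreover have "N \<subseteq> J"
    unfolding J_def using zero NA by force
  moreover have "x \<in> J"
    unfolding J_def using zero \<open>1 \<in> A\<close> by force
  ultimately have "J = A"
    using max xN unfolding maximal_in_def by blast
  then have "1 \<in> J"
    using \<open>1 \<in> A\<close> by simp
  then obtain n a where na: "1 = n + a * x" "n \<in> N" "a \<in> A"
    unfolding J_def by blast
  have "y = y * n + a * (x * y)"
    using na(1) by (metis mult.commute mult.left_commute mult_1_right distrib_left)
  then show "y \<in> N"
    using N_add N_mult na y xy NA by (metis subsetD)
qed

lemma maximal_radical:
  assumes max: "maximal_in A N"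
    and closed: "\<And>x y. x \<in> A \<Longrightarrow> y \<in> A \<Longrightarrow> x + y \<in> A \<and> x * y \<in> A" and one: "1 \<in> A"
    and f: "f \<in> A" and fm: "f ^ m \<in> N"
  shows "f \<in> N"
  using fm
proof (induction m)
  case 0
  then show ?case
    using max f unfolding maximal_in_def ideal_in_def by (metis mult_1_right power_0)
next
  case (Suc m)
  have "f ^ m \<in> A"
    using closed one f by (induction m) auto
  then show ?case
    using maximal_imp_prime[OF max closed one f] Suc by auto
qed

theorem mainTheorem10:
  fixes \<iota> :: "complex \<Rightarrow> 'b::idom" and D :: "'b \<Rightarrow> 'b" and A :: "'b set" and M :: "'b set"
  assumes scal: "scalar_hom \<iota>"
    and B_affine: "fg_algebra \<iota> (UNIV :: 'b set)"
    and B_normal: "normal_domain (UNIV :: 'b set)"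
    and der: "derivation \<iota> D"
    and lnd: "locally_nilpotent D"
    and A_def: "A = {b. D b = 0}"
    and S_affine: "fg_algebra \<iota> A"
    and S_normal: "normal_domain A"
    and S_surface: "krull_dim_eq A 2"
    and x_regular: "regular_point A M"
    and princ: "principal_bundle_off A D M"
  shows "\<forall>\<nu>>0. \<forall>N. maximal_in A N \<and> (D ^^ \<nu>) ` {b. (D ^^ Suc \<nu>) b = 0} \<subseteq> N \<longrightarrow> N = M"
proof (intro allI impI)
  fix \<nu> :: nat and N
  assume "\<nu> > 0" and "maximal_in A N \<and> (D ^^ \<nu>) ` {b. (D ^^ Suc \<nu>) b = 0} \<subseteq> N"
  then have max: "maximal_in A N" and m_nu: "(D ^^ \<nu>) ` {b. (D ^^ Suc \<nu>) b = 0} \<subseteq> N"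
    by blast+
  have closed: "\<And>x y. x \<in> A \<Longrightarrow> y \<in> A \<Longrightarrow> x + y \<in> A \<and> x * y \<in> A" and one: "1 \<in> A"
    using A_def kernel_closed[OF der] derivation_one[OF der] by auto
  have scalars: "range \<iota> \<subseteq> A"
    using der A_def unfolding derivation_def by auto
  show "N = M"
  proof (rule ccontr)
    assume "N \<noteq> M"
    then obtain f b k where f: "f \<in> A" "f \<notin> N" and Db: "D b = f ^ k"
      using princ max unfolding principal_bundle_off_def trivial_over_def by blast
    have "of_nat (fact \<nu>) * (f ^ k) ^ \<nu> \<in> N"
      using factorial_power_in_image[OF der Db kernel_power[OF der]] f A_def m_nu by auto
    then have "f ^ (k * \<nu>) \<in> N"
      using ideal_cancel_of_nat[OF scal scalars _ fact_nonzero, of N \<nu>] max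
      by (simp add: maximal_in_def power_mult)
    then show False
      using maximal_radical[OF max closed one f(1)] f(2) by blast
  qed
qed

end
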